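(* If $a$ and $m$ are integers with $m>0$, then $m$ divides $(a^m-a)\,(m-1)!$. *)

theory Defs
  imports Main
begin

end

theory Submission
  imports Defs "HOL-Number_Theory.Number_Theory"
begin

text \<open>
  For prime \<open>m\<close> the factor \<open>a ^ m - a\<close> is divisible by \<open>m\<close> (Fermat's little theorem).
  For composite \<open>m \<noteq> 4\<close> already \<open>(m - 1)!\<close> is divisible by \<open>m\<close>: writing \<open>m = r s\<close> with
  \<open>1 < r \<le> s\<close>, the numbers \<open>r < s\<close> (or \<open>r < 2 r\<close> if \<open>r = s > 2\<close>) are distinct factors of
  \<open>(m - 1)!\<close>. The remaining case \<open>m = 4\<close> holds because \<open>a ^ 4 - a\<close> is even and \<open>3! = 6\<close>.
\<close>

lemma fermat_little_int:
  fixes a :: int and p :: nat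
  assumes "prime p"
  shows "int p dvd a ^ p - a"
proof -
  have factor: "a ^ p - a = a * (a ^ (p - 1) - 1)"
    using assms prime_gt_0_nat by (simp add: right_diff_distrib power_eq_if)
  show ?thesis
  proof (cases "int p dvd a")
    case True
    then show ?thesis
      unfolding factor by (rule dvd_mult2)
  next
    case False
    have "coprime a (int p)"
      using prime_imp_coprime[of "int p" a] assms False by (simp add: coprime_commute)
    moreover have "residues (int p)"
      using assms prime_gt_1_nat by (simp add: residues_def)
    ultimately have "[a ^ totient p = 1] (mod int p)"
      using residues.euler_theorem[of "int p" a] by simp
    then have "int p dvd a ^ (p - 1) - 1"
      using assms by (simp add: totient_prime cong_iff_dvd_diff)
    then show ?thesis
      unfolding factor by (rule dvd_mult)
  qed
qed

lemma mult_dvd_fact: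
  fixes i j n :: nat
  assumes "1 \<le> i" "i < j" "j \<le> n"
  shows "i * j dvd fact n"
proof -
  have "i * j dvd fact (j - 1) * j"
    using assms by (simp add: dvd_fact)
  also have "fact (j - 1) * j = (fact j :: nat)"
    using assms by (simp add: fact_reduce[of j])
  also have "(fact j :: nat) dvd fact n"
    using assms by (simp add: fact_dvd)
  finally show ?thesis .
qed

lemma composite_dvd_fact_pred:
  fixes m :: nat
  assumes "1 < m" "\<not> prime m" "m \<noteq> 4"
  shows "m dvd fact (m - 1)"
proof -
  obtain r s where m: "m = r * s" and r: "1 < r" and rs: "r \<le> s"
  proof -
    obtain r where "r dvd m" "r \<noteq> 1" "r \<noteq> m"
      using assms prime_nat_iff by auto
    then obtain s where "m = r * s" "1 < r" "1 < s"
      using assms(1) by (auto simp: nat_neq_iff)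
    then show ?thesis
      using that[of r s] that[of s r] nat_le_linear[of r s] by (auto simp: mult.commute)
  qed
  show ?thesis
  proof (cases "r = s")
    case False
    have "0 < s"
      using assms(1) m by (cases s) auto
    then have "s < m"
      using m r by simp
    then have "r * s dvd fact (m - 1)"
      using r rs False by (intro mult_dvd_fact) auto
    then show ?thesis
      using m by simp
  next
    case True
    then have "r \<noteq> 2"
      using assms(3) m by auto
    then have "2 * r < m"
      using m r True by simp
    then have "r * (2 * r) dvd fact (m - 1)"
      using r by (intro mult_dvd_fact) auto
    moreover have "m dvd r * (2 * r)"
      using m True by simp
    ultimately show ?thesis
      using dvd_trans by blast
  qed
qed

theorem mainTheorem11:
  fixes a :: int and m :: nat
  assumes "m > 0"
  shows "int m dvd (a ^ m - a) * fact (m - 1)"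
proof -
  consider "m = 1" | "prime m" | "m = 4" | "1 < m" "\<not> prime m" "m \<noteq> 4"
    using assms by linarith
  then show ?thesis
  proof cases
    case 1
    then show ?thesis by simp
  next
    case 2
    then show ?thesis by (simp add: fermat_little_int)
  next
    case 3
    have "even (a ^ 4 - a)"
      by (cases "even a") auto
    then obtain k where "a ^ 4 - a = 2 * k" ..
    moreover have "fact 3 = (6 :: int)"
      by (simp add: fact_numeral)
    ultimately have "(a ^ 4 - a) * fact (4 - 1) = 4 * (3 * k)"
      by simp
    then show ?thesis
      using 3 by simp
  next
    case 4
    then have "m dvd fact (m - 1)"
      by (rule composite_dvd_fact_pred)
    then have "int m dvd fact (m - 1)"
      by (metis int_dvd_int_iff of_nat_fact)
    then show ?thesis
      by simp
  qed
qed

end
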